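(* Let $d,k,S\ge1$ be integers and $N\ge (S+1)^d k$. Let $f(\mathbf{x}_1,\dots,\mathbf{x}_N)$, $\mathbf{x}_i\in\mathbb{R}^d$, be a real polynomial in the $dN$ coordinates such that for each $j\in\{1,\dots,N\}$ the degree of $f$ in $\mathbf{x}_j$ is at most $S$, and such that $f=0$ on $\triangle_k$. Then $f\equiv0$.
   Context: The degree of $f$ in $\mathbf{x}_j$ means the total degree of $f$ as a polynomial in the $d$ coordinates of $\mathbf{x}_j$ (coefficients being polynomials in the other variables). $\triangle_k=\{(\mathbf{x}_1,\dots,\mathbf{x}_N)\in(\mathbb{R}^d)^N:\mathbf{x}_{j_1}=\dots=\mathbf{x}_{j_k}\text{ for some distinct indices }j_1,\dots,j_k\}$ (for $k=1$ this is all of $(\mathbb{R}^d)^N$). *)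

theory Defs
  imports Complex_Main
begin

text \<open>Real polynomials in the d*N coordinates x_j i (j < N, i < d) are represented
by their coefficient function on exponent vectors e :: nat \<times> nat \<Rightarrow> nat,
where e (j,i) is the exponent of coordinate i of the point x_j.\<close>

definition is_poly :: "nat \<Rightarrow> nat \<Rightarrow> (((nat \<times> nat) \<Rightarrow> nat) \<Rightarrow> real) \<Rightarrow> bool" where
  "is_poly N d c \<longleftrightarrow> finite {e. c e \<noteq> 0} \<and>
     (\<forall>e. c e \<noteq> 0 \<longrightarrow> (\<forall>j i. \<not> (j < N \<and> i < d) \<longrightarrow> e (j, i) = 0))"

definition mono_eval :: "nat \<Rightarrow> nat \<Rightarrow> ((nat \<times> nat) \<Rightarrow> nat) \<Rightarrow> (nat \<Rightarrow> nat \<Rightarrow> real) \<Rightarrow> real" where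
  "mono_eval N d e x = (\<Prod>j<N. \<Prod>i<d. x j i ^ e (j, i))"

definition poly_eval :: "nat \<Rightarrow> nat \<Rightarrow> (((nat \<times> nat) \<Rightarrow> nat) \<Rightarrow> real) \<Rightarrow> (nat \<Rightarrow> nat \<Rightarrow> real) \<Rightarrow> real" where
  "poly_eval N d c x = (\<Sum>e\<in>{e. c e \<noteq> 0}. c e * mono_eval N d e x)"

definition deg_in_point :: "nat \<Rightarrow> (((nat \<times> nat) \<Rightarrow> nat) \<Rightarrow> real) \<Rightarrow> nat \<Rightarrow> nat" where
  "deg_in_point d c j = Max (insert 0 {(\<Sum>i<d. e (j, i)) | e. c e \<noteq> 0})"

definition in_diag :: "nat \<Rightarrow> nat \<Rightarrow> nat \<Rightarrow> (nat \<Rightarrow> nat \<Rightarrow> real) \<Rightarrow> bool" where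
  "in_diag N d k x \<longleftrightarrow> (\<exists>J. J \<subseteq> {..<N} \<and> card J = k \<and>
      (\<forall>a\<in>J. \<forall>b\<in>J. \<forall>i<d. x a i = x b i))"

end

theory Submission
  imports Defs "HOL-Computational_Algebra.Polynomial"
begin

text \<open>A polynomial of degree at most S in each variable separately that vanishes on a grid
G^V with card G > S is the zero polynomial (induction on the variables, peeling off one
variable at a time and using that a nonzero univariate polynomial of degree at most S has at
most S roots). Take G = {0, ..., S}: each of the N points x_j of a grid configuration lies in
one of the (S + 1)^d cells G^d, so by pigeonhole some k of them coincide, i.e. the whole grid
lies in the diagonal set, where f vanishes. The degree of f in x_j bounds the degree in each
coordinate of x_j.\<close>

lemma coeffs_zero_if_vanishes_on_many:
  fixes b :: "nat \<Rightarrow> 'a::idom" and G :: "'a set"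
  assumes "finite G" and "S < card G"
    and vanish: "\<And>t. t \<in> G \<Longrightarrow> (\<Sum>a\<le>S. t ^ a * b a) = 0"
    and "a \<le> S"
  shows "b a = 0"
proof -
  define p where "p = (\<Sum>a\<le>S. monom (b a) a)"
  have poly_p: "poly p t = (\<Sum>a\<le>S. t ^ a * b a)" for t
    unfolding p_def by (simp add: poly_sum poly_monom mult.commute)
  have "p = 0"
  proof (rule ccontr)
    assume "p \<noteq> 0"
    have "G \<subseteq> {t. poly p t = 0}" using vanish poly_p by auto
    then have "card G \<le> card {t. poly p t = 0}"
      using \<open>p \<noteq> 0\<close> poly_roots_finite card_mono by blast
    also have "\<dots> \<le> degree p" using \<open>p \<noteq> 0\<close> by (rule card_poly_roots_bound)
    also have "degree p \<le> S" unfolding p_def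
      by (rule degree_sum_le) (auto intro: order_trans[OF degree_monom_le])
    finally show False using \<open>S < card G\<close> by simp
  qed
  then show ?thesis
    using coeff_sum_monom[OF \<open>a \<le> S\<close>, of b] unfolding p_def by simp
qed

lemma pigeonhole_fibre:
  assumes "finite B" and "f ` A \<subseteq> B" and "card B * k < card A"
  shows "\<exists>b\<in>B. k < card {a\<in>A. f a = b}"
proof (rule ccontr)
  assume "\<not> ?thesis"
  then have small: "card {a\<in>A. f a = b} \<le> k" if "b \<in> B" for b
    using that by (simp add: not_less)
  have "finite A" using \<open>card B * k < card A\<close> card.infinite by fastforce
  have "card A = card (\<Union>b\<in>B. {a\<in>A. f a = b})"
    using \<open>f ` A \<subseteq> B\<close> by (intro arg_cong[where f = card]) auto
  also have "\<dots> = (\<Sum>b\<in>B. card {a\<in>A. f a = b})"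
    by (rule card_UN_disjoint) (use \<open>finite A\<close> \<open>finite B\<close> in auto)
  also have "\<dots> \<le> card B * k" using sum_mono[OF small] by simp
  finally show False using \<open>card B * k < card A\<close> by simp
qed

definition mpoly_eval :: "'v set \<Rightarrow> (('v \<Rightarrow> nat) \<Rightarrow> 'a::comm_semiring_1) \<Rightarrow> ('v \<Rightarrow> 'a) \<Rightarrow> 'a" where
  "mpoly_eval V c x = (\<Sum>e\<in>{e. c e \<noteq> 0}. c e * (\<Prod>w\<in>V. x w ^ e w))"

text \<open>The coefficient of x_v^a, as a polynomial in the remaining variables.\<close>

definition coeff_slice :: "'v \<Rightarrow> nat \<Rightarrow> (('v \<Rightarrow> nat) \<Rightarrow> 'a::zero) \<Rightarrow> ('v \<Rightarrow> nat) \<Rightarrow> 'a" where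
  "coeff_slice v a c e = (if e v = 0 then c (e(v := a)) else 0)"

lemma coeff_slice_nonzeroD:
  assumes "coeff_slice v a c e \<noteq> 0"
  shows "e v = 0" and "c (e(v := a)) \<noteq> 0"
  using assms by (auto simp: coeff_slice_def split: if_splits)

lemma coeff_slice_at_exponent: "coeff_slice v (e v) c (e(v := 0)) = c e"
  by (simp add: coeff_slice_def)

lemma coeff_slice_vars:
  assumes "\<And>e w. c e \<noteq> 0 \<Longrightarrow> w \<notin> insert v V \<Longrightarrow> e w = 0"
    and "coeff_slice v a c e \<noteq> 0" and "w \<notin> V"
  shows "e w = 0"
  using coeff_slice_nonzeroD[OF assms(2)] assms(1)[of "e(v := a)" w] assms(3)
  by (metis fun_upd_other insert_iff)

lemma coeff_slice_exponent_le:
  assumes "\<And>e w. c e \<noteq> 0 \<Longrightarrow> e w \<le> S" and "coeff_slice v a c e \<noteq> 0"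
  shows "e w \<le> S"
  using coeff_slice_nonzeroD[OF assms(2)] assms(1)[of "e(v := a)" w]
  by (metis fun_upd_other le0)

lemma finite_support_coeff_slice:
  assumes "finite {e. c e \<noteq> 0}"
  shows "finite {e. coeff_slice v a c e \<noteq> 0}"
proof -
  have "{e. coeff_slice v a c e \<noteq> 0} \<subseteq> (\<lambda>e. e(v := 0)) ` {e. c e \<noteq> 0}"
  proof
    fix e assume "e \<in> {e. coeff_slice v a c e \<noteq> 0}"
    then have "e v = 0" and "c (e(v := a)) \<noteq> 0" by (auto dest: coeff_slice_nonzeroD)
    then show "e \<in> (\<lambda>e. e(v := 0)) ` {e. c e \<noteq> 0}"
      by (intro image_eqI[of _ _ "e(v := a)"]) auto
  qed
  then show ?thesis using assms finite_subset by blast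
qed

lemma mpoly_eval_update_outside:
  assumes "v \<notin> V"
  shows "mpoly_eval V c (x(v := t)) = mpoly_eval V c x"
  unfolding mpoly_eval_def using assms
  by (intro sum.cong refl arg_cong2[where f = "(*)"] prod.cong) auto

lemma mpoly_eval_empty:
  assumes "\<And>e w. c e \<noteq> 0 \<Longrightarrow> e w = 0"
  shows "mpoly_eval {} c x = c (\<lambda>_. 0)"
proof -
  have "{e. c e \<noteq> 0} \<subseteq> {\<lambda>_. 0}" using assms by auto
  from sum.mono_neutral_left[OF _ this] have "(\<Sum>e | c e \<noteq> 0. c e) = c (\<lambda>_. 0)"
    by auto
  then show ?thesis by (simp add: mpoly_eval_def)
qed

lemma sum_slice_eq_mpoly_eval_coeff_slice:
  assumes "finite V" and "v \<notin> V"
  shows "(\<Sum>e | c e \<noteq> 0 \<and> e v = a. c e * (\<Prod>w\<in>V. x w ^ e w)) = mpoly_eval V (coeff_slice v a c) x"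
proof -
  let ?M = "\<lambda>e. \<Prod>w\<in>V. x w ^ e w"
  have bij: "bij_betw (\<lambda>e. e(v := a)) {e. coeff_slice v a c e \<noteq> 0} {e. c e \<noteq> 0 \<and> e v = a}"
    by (rule bij_betw_byWitness[where f' = "\<lambda>e. e(v := 0)"])
      (auto simp: coeff_slice_def split: if_splits)
  have "(\<Sum>e | c e \<noteq> 0 \<and> e v = a. c e * ?M e)
      = (\<Sum>e | coeff_slice v a c e \<noteq> 0. c (e(v := a)) * ?M (e(v := a)))"
    using sum.reindex_bij_betw[OF bij, of "\<lambda>e. c e * ?M e"] by simp
  also have "\<dots> = (\<Sum>e | coeff_slice v a c e \<noteq> 0. coeff_slice v a c e * ?M e)"
  proof (rule sum.cong[OF refl])
    fix e assume "e \<in> {e. coeff_slice v a c e \<noteq> 0}"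
    then have "e v = 0" by (auto dest: coeff_slice_nonzeroD)
    moreover have "?M (e(v := a)) = ?M e" using \<open>v \<notin> V\<close> by (intro prod.cong) auto
    ultimately show "c (e(v := a)) * ?M (e(v := a)) = coeff_slice v a c e * ?M e"
      by (simp add: coeff_slice_def)
  qed
  finally show ?thesis unfolding mpoly_eval_def .
qed

lemma mpoly_eval_insert_slices:
  assumes "finite V" and "v \<notin> V" and "finite {e. c e \<noteq> 0}"
    and "\<And>e. c e \<noteq> 0 \<Longrightarrow> e v \<le> S"
  shows "mpoly_eval (insert v V) c x = (\<Sum>a\<le>S. x v ^ a * mpoly_eval V (coeff_slice v a c) x)"
proof -
  let ?M = "\<lambda>e. \<Prod>w\<in>V. x w ^ e w"
  have "mpoly_eval (insert v V) c x = (\<Sum>e | c e \<noteq> 0. \<Sum>a\<le>S. if e v = a then x v ^ a * (c e * ?M e) else 0)"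
    unfolding mpoly_eval_def using assms
    by (intro sum.cong refl) (simp add: ac_simps)
  also have "\<dots> = (\<Sum>a\<le>S. \<Sum>e | c e \<noteq> 0 \<and> e v = a. x v ^ a * (c e * ?M e))"
    using assms(3) by (subst sum.swap) (simp add: sum.inter_filter[symmetric] conj_commute)
  also have "\<dots> = (\<Sum>a\<le>S. x v ^ a * mpoly_eval V (coeff_slice v a c) x)"
    using assms(1,2) by (simp add: sum_distrib_left[symmetric] sum_slice_eq_mpoly_eval_coeff_slice)
  finally show ?thesis .
qed

lemma coeffs_zero_if_vanishes_on_grid:
  fixes c :: "('v \<Rightarrow> nat) \<Rightarrow> 'a::idom" and G :: "'a set"
  assumes "finite V" and "finite G" and "S < card G"
    and "finite {e. c e \<noteq> 0}"
    and "\<And>e w. c e \<noteq> 0 \<Longrightarrow> w \<notin> V \<Longrightarrow> e w = 0"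
    and "\<And>e w. c e \<noteq> 0 \<Longrightarrow> e w \<le> S"
    and "\<And>x. (\<And>w. w \<in> V \<Longrightarrow> x w \<in> G) \<Longrightarrow> mpoly_eval V c x = 0"
  shows "c e = 0"
  using assms(1,4-7)
proof (induction V arbitrary: c e rule: finite_induct)
  case empty
  then have "mpoly_eval {} c x = c (\<lambda>_. 0)" for x by (intro mpoly_eval_empty) auto
  then have "c (\<lambda>_. 0) = 0" using empty.prems(4) by simp
  moreover have "c e \<noteq> 0 \<Longrightarrow> e = (\<lambda>_. 0)" using empty.prems(2) by auto
  ultimately show ?case by blast
next
  case (insert v V)
  have expand: "mpoly_eval (insert v V) c y = (\<Sum>a\<le>S. y v ^ a * mpoly_eval V (coeff_slice v a c) y)"
    for y by (rule mpoly_eval_insert_slices) (use insert.hyps insert.prems(1,3) in auto)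
  have slice_zero: "coeff_slice v a c e' = 0" if "a \<le> S" for a e'
  proof (rule insert.IH)
    show "finite {e. coeff_slice v a c e \<noteq> 0}"
      using insert.prems(1) by (rule finite_support_coeff_slice)
    show "e w = 0" if "coeff_slice v a c e \<noteq> 0" and "w \<notin> V" for e w
      using insert.prems(2) that by (rule coeff_slice_vars)
    show "e w \<le> S" if "coeff_slice v a c e \<noteq> 0" for e w
      using insert.prems(3) that by (rule coeff_slice_exponent_le)
    fix x assume x_grid: "\<And>w. w \<in> V \<Longrightarrow> x w \<in> G"
    have "(\<Sum>a\<le>S. t ^ a * mpoly_eval V (coeff_slice v a c) x) = 0" if "t \<in> G" for t
    proof -
      have "mpoly_eval (insert v V) c (x(v := t)) = 0"
        using x_grid \<open>t \<in> G\<close> by (intro insert.prems(4)) auto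
      then show ?thesis
        by (simp add: expand mpoly_eval_update_outside[OF insert.hyps(2)])
    qed
    from coeffs_zero_if_vanishes_on_many[OF assms(2,3) this \<open>a \<le> S\<close>]
    show "mpoly_eval V (coeff_slice v a c) x = 0" .
  qed
  show ?case
  proof (rule ccontr)
    assume "c e \<noteq> 0"
    then have "e v \<le> S" by (rule insert.prems(3))
    from slice_zero[OF this, of "e(v := 0)"] \<open>c e \<noteq> 0\<close> show False
      by (simp add: coeff_slice_at_exponent)
  qed
qed

lemma in_diag_if_coords_in:
  fixes x :: "nat \<Rightarrow> nat \<Rightarrow> real"
  assumes "finite G" and "G \<noteq> {}" and "k \<ge> 1" and "card G ^ d * k \<le> N"
    and "\<And>j i. j < N \<Longrightarrow> i < d \<Longrightarrow> x j i \<in> G"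
  shows "in_diag N d k x"
proof -
  define cells where "cells = {p. set p \<subseteq> G \<and> length p = d}"
  define point where "point j = map (x j) [0..<d]" for j
  have "card cells = card G ^ d"
    unfolding cells_def using card_lists_length_eq[OF \<open>finite G\<close>] by simp
  moreover have "card G ^ d * (k - 1) < card G ^ d * k"
    using assms(1-3) by (simp add: card_gt_0_iff)
  ultimately have "card cells * (k - 1) < card {..<N}"
    using assms(4) by (metis card_lessThan order_less_le_trans)
  moreover have "finite cells"
    unfolding cells_def using finite_lists_length_eq[OF \<open>finite G\<close>] by simp
  moreover have "point ` {..<N} \<subseteq> cells"
    unfolding cells_def point_def using assms(5) by auto
  ultimately obtain p where "k - 1 < card {j \<in> {..<N}. point j = p}"
    using pigeonhole_fibre by blast
  then have "k \<le> card {j \<in> {..<N}. point j = p}" by linarith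
  then obtain J where J: "J \<subseteq> {j \<in> {..<N}. point j = p}" "card J = k"
    by (meson obtain_subset_with_card_n)
  show ?thesis unfolding in_diag_def
  proof (intro exI conjI ballI allI impI)
    show "J \<subseteq> {..<N}" and "card J = k" using J by auto
    fix a b i assume "a \<in> J" "b \<in> J" "i < d"
    then have "point a = point b" using J by auto
    then have "point a ! i = point b ! i" by simp
    then show "x a i = x b i" unfolding point_def using \<open>i < d\<close> by simp
  qed
qed

lemma exponent_le_deg_in_point:
  assumes "finite {e. c e \<noteq> 0}" and "c e \<noteq> 0" and "i < d"
  shows "e (j, i) \<le> deg_in_point d c j"
proof -
  have "e (j, i) \<le> (\<Sum>i'<d. e (j, i'))" using \<open>i < d\<close> by (intro member_le_sum) auto
  also have "\<dots> \<le> deg_in_point d c j"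
    unfolding deg_in_point_def using assms(1,2) by (intro Max_ge) (auto simp: Setcompr_eq_image)
  finally show ?thesis .
qed

lemma exponent_le_if_deg_in_point_le:
  assumes "is_poly N d c" and "\<forall>j<N. deg_in_point d c j \<le> S" and "c e \<noteq> 0"
  shows "e w \<le> S"
proof (cases w)
  case (Pair j i)
  show ?thesis
  proof (cases "j < N \<and> i < d")
    case True
    then have "e (j, i) \<le> deg_in_point d c j"
      using assms(1,3) by (intro exponent_le_deg_in_point) (auto simp: is_poly_def)
    then show ?thesis using assms(2) True Pair by fastforce
  next
    case False
    then have "e (j, i) = 0" using assms(1,3) unfolding is_poly_def by blast
    then show ?thesis using Pair by simp
  qed
qed

lemma poly_eval_eq_mpoly_eval:
  "poly_eval N d c x = mpoly_eval ({..<N} \<times> {..<d}) c (\<lambda>(j, i). x j i)"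
  unfolding poly_eval_def mono_eval_def mpoly_eval_def
  by (simp add: prod.cartesian_product case_prod_unfold)

theorem mainTheorem7:
  fixes d k S N :: nat and c :: "((nat \<times> nat) \<Rightarrow> nat) \<Rightarrow> real"
  assumes "d \<ge> 1" and "k \<ge> 1" and "S \<ge> 1"
    and "N \<ge> (S + 1) ^ d * k"
    and "is_poly N d c"
    and "\<forall>j<N. deg_in_point d c j \<le> S"
    and "\<forall>x. in_diag N d k x \<longrightarrow> poly_eval N d c x = 0"
  shows "\<forall>e. c e = 0"
proof -
  define V where "V = {..<N} \<times> {..<d}"
  define G where "G = (of_nat ` {..S} :: real set)"
  have card_G: "card G = S + 1" by (simp add: G_def card_image)
  have supp: "finite {e. c e \<noteq> 0}"
    using \<open>is_poly N d c\<close> unfolding is_poly_def by simp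
  have outside: "e w = 0" if "c e \<noteq> 0" and "w \<notin> V" for e w
    using \<open>is_poly N d c\<close> that unfolding is_poly_def V_def by (cases w) auto
  have exponents: "e w \<le> S" if "c e \<noteq> 0" for e w
    using assms(5,6) that by (rule exponent_le_if_deg_in_point_le)
  have grid: "mpoly_eval V c x = 0" if "\<And>w. w \<in> V \<Longrightarrow> x w \<in> G" for x
  proof -
    have "in_diag N d k (\<lambda>j i. x (j, i))"
      by (rule in_diag_if_coords_in[where G = G])
        (use assms(2,4) card_G that in \<open>auto simp: G_def V_def\<close>)
    then show ?thesis
      using assms(7) poly_eval_eq_mpoly_eval[of N d c "\<lambda>j i. x (j, i)"] by (simp add: V_def)
  qed
  have "finite V" and "finite G" by (simp_all add: V_def G_def)
  show ?thesis
  proof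
    fix e
    show "c e = 0"
      by (rule coeffs_zero_if_vanishes_on_grid[where V = V and G = G and S = S])
        (fact \<open>finite V\<close> \<open>finite G\<close> supp outside exponents grid | simp add: card_G)+
  qed
qed

end
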